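(* In the $3$-fold Cartesian product, a related component of a good set need not be a full component: the good set $T$ is full (so $T$ is its own unique full component), while every related component of $T$ is a singleton; in particular $T$ has infinitely many related components.
   Context: Let $X_1,X_2,X_3$ be pairwise disjoint nonempty sets and $\Omega=X_1\times X_2\times X_3$, with projections $\Pi_i:\Omega\to X_i$. A set $S\subset\Omega$ is good if every function $f:S\to\mathbb C$ can be written $f(w_1,w_2,w_3)=u_1(w_1)+u_2(w_2)+u_3(w_3)$ for all $(w_1,w_2,w_3)\in S$, for some functions $u_i:X_i\to\mathbb C$. A set $S$ is full if it is a maximal good subset of $\Pi_1S\times\Pi_2S\times\Pi_3S$. For a good set $S$, the maximal full subsets of $S$ are its full components (they partition $S$). Two points $p,q$ of a good set $S$ are related if some finite full subset of $S$ contains both; this is an equivalence relation whose classes are the related components of $S$. Construction: fix pairwise distinct elements $x_1,y_1,\alpha_{5k-4},\alpha_{5k-1}$ ($k\ge1$) of $X_1$; pairwise distinct elements $x_2,y_2,\alpha_{5k-3},\alpha_{5k}$ ($k\ge1$) of $X_2$; pairwise distinct elements $x_3,z_3,\alpha_{5k-2}$ ($k\ge1$) of $X_3$. Set the convention $\alpha_{-3}:=y_2$, $\alpha_{-2}:=z_3$. Define $a_1=(x_1,x_2,x_3)$, $a_2=(y_1,y_2,x_3)$, $a_3=(y_1,x_2,z_3)$ and for $n\ge1$: $a_{5n-1}=(\alpha_{5n-4},\alpha_{5n-3},\alpha_{5n-2})$, $a_{5n}=(\alpha_{5n-1},\alpha_{5n},\alpha_{5n-2})$, $a_{5n+1}=(\alpha_{5n-4},\alpha_{5n},\alpha_{5n-7})$,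 $a_{5n+2}=(\alpha_{5n-1},\alpha_{5n-3},x_3)$, $a_{5n+3}=(x_1,\alpha_{5n-8},\alpha_{5n-2})$. Let $T=\{a_i:i\ge1\}$. *)

theory Defs
  imports Complex_Main
begin

text \<open>Points of \<Omega> = X1 \<times> X2 \<times> X3 are triples (w1, w2, w3) :: 'a \<times> 'b \<times> 'c;
  the sets X1 :: 'a set, X2 :: 'b set, X3 :: 'c set live in separate types,
  so they are automatically pairwise disjoint.\<close>

definition proj1 :: "('a \<times> 'b \<times> 'c) set \<Rightarrow> 'a set" where
  "proj1 S = (\<lambda>w. fst w) ` S"
definition proj2 :: "('a \<times> 'b \<times> 'c) set \<Rightarrow> 'b set" where
  "proj2 S = (\<lambda>w. fst (snd w)) ` S"
definition proj3 :: "('a \<times> 'b \<times> 'c) set \<Rightarrow> 'c set" where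
  "proj3 S = (\<lambda>w. snd (snd w)) ` S"

definition good :: "'a set \<Rightarrow> 'b set \<Rightarrow> 'c set \<Rightarrow> ('a \<times> 'b \<times> 'c) set \<Rightarrow> bool" where
  "good X1 X2 X3 S \<longleftrightarrow> S \<subseteq> X1 \<times> X2 \<times> X3 \<and>
     (\<forall>f :: 'a \<times> 'b \<times> 'c \<Rightarrow> complex. \<exists>u1 u2 u3.
        \<forall>w1 w2 w3. (w1, w2, w3) \<in> S \<longrightarrow> f (w1, w2, w3) = u1 w1 + u2 w2 + u3 w3)"

definition full :: "'a set \<Rightarrow> 'b set \<Rightarrow> 'c set \<Rightarrow> ('a \<times> 'b \<times> 'c) set \<Rightarrow> bool" where
  "full X1 X2 X3 S \<longleftrightarrow> good X1 X2 X3 S \<and>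
     (\<forall>S'. S \<subseteq> S' \<and> S' \<subseteq> proj1 S \<times> proj2 S \<times> proj3 S \<and> good X1 X2 X3 S' \<longrightarrow> S' = S)"

definition full_components :: "'a set \<Rightarrow> 'b set \<Rightarrow> 'c set \<Rightarrow> ('a \<times> 'b \<times> 'c) set \<Rightarrow> ('a \<times> 'b \<times> 'c) set set" where
  "full_components X1 X2 X3 S = {F. F \<subseteq> S \<and> full X1 X2 X3 F \<and>
      (\<forall>F'. F \<subseteq> F' \<and> F' \<subseteq> S \<and> full X1 X2 X3 F' \<longrightarrow> F' = F)}"

definition related :: "'a set \<Rightarrow> 'b set \<Rightarrow> 'c set \<Rightarrow> ('a \<times> 'b \<times> 'c) set \<Rightarrow> ('a \<times> 'b \<times> 'c) \<Rightarrow> ('a \<times> 'b \<times> 'c) \<Rightarrow> bool" where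
  "related X1 X2 X3 S p q \<longleftrightarrow> (\<exists>F. finite F \<and> F \<subseteq> S \<and> full X1 X2 X3 F \<and> p \<in> F \<and> q \<in> F)"

definition related_components :: "'a set \<Rightarrow> 'b set \<Rightarrow> 'c set \<Rightarrow> ('a \<times> 'b \<times> 'c) set \<Rightarrow> ('a \<times> 'b \<times> 'c) set set" where
  "related_components X1 X2 X3 S = {{q \<in> S. related X1 X2 X3 S p q} | p. p \<in> S}"

text \<open>For k \<ge> 1:
  A k = \<alpha>(5k-4), B k = \<alpha>(5k-1)  (in X1);
  C k = \<alpha>(5k-3), D k = \<alpha>(5k)    (in X2);
  E k = \<alpha>(5k-2)                  (in X3).
  Conventions \<alpha>(-3) = y2 and \<alpha>(-2) = z3 are realised by C0 0 = y2, E0 0 = z3.\<close>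

definition extC :: "'b \<Rightarrow> (nat \<Rightarrow> 'b) \<Rightarrow> nat \<Rightarrow> 'b" where
  "extC y2 C n = (if n = 0 then y2 else C n)"
definition extE :: "'c \<Rightarrow> (nat \<Rightarrow> 'c) \<Rightarrow> nat \<Rightarrow> 'c" where
  "extE z3 E n = (if n = 0 then z3 else E n)"

text \<open>The sequence a_i (i \<ge> 1).  a_1, a_2, a_3 are given explicitly; for n \<ge> 1:
  a(5n-1) = (\<alpha>(5n-4), \<alpha>(5n-3), \<alpha>(5n-2)),  a(5n) = (\<alpha>(5n-1), \<alpha>(5n), \<alpha>(5n-2)),
  a(5n+1) = (\<alpha>(5n-4), \<alpha>(5n), \<alpha>(5n-7)),  a(5n+2) = (\<alpha>(5n-1), \<alpha>(5n-3), x3),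
  a(5n+3) = (x1, \<alpha>(5n-8), \<alpha>(5n-2)).\<close>
definition aseq :: "'a \<Rightarrow> 'a \<Rightarrow> 'b \<Rightarrow> 'b \<Rightarrow> 'c \<Rightarrow> 'c \<Rightarrow>
    (nat \<Rightarrow> 'a) \<Rightarrow> (nat \<Rightarrow> 'a) \<Rightarrow> (nat \<Rightarrow> 'b) \<Rightarrow> (nat \<Rightarrow> 'b) \<Rightarrow> (nat \<Rightarrow> 'c) \<Rightarrow>
    nat \<Rightarrow> 'a \<times> 'b \<times> 'c" where
  "aseq x1 y1 x2 y2 x3 z3 A B C D E i =
    (if i = 1 then (x1, x2, x3)
     else if i = 2 then (y1, y2, x3)
     else if i = 3 then (y1, x2, z3)
     else (let n = (i + 1) div 5 in
       if (i + 1) mod 5 = 0 then (A n, C n, E n)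
       else if (i + 1) mod 5 = 1 then (B n, D n, E n)
       else if (i + 1) mod 5 = 2 then (A n, D n, extE z3 E (n - 1))
       else if (i + 1) mod 5 = 3 then (B n, C n, x3)
       else (x1, extC y2 C (n - 1), E n)))"

definition Tset :: "'a \<Rightarrow> 'a \<Rightarrow> 'b \<Rightarrow> 'b \<Rightarrow> 'c \<Rightarrow> 'c \<Rightarrow>
    (nat \<Rightarrow> 'a) \<Rightarrow> (nat \<Rightarrow> 'a) \<Rightarrow> (nat \<Rightarrow> 'b) \<Rightarrow> (nat \<Rightarrow> 'b) \<Rightarrow> (nat \<Rightarrow> 'c) \<Rightarrow>
    ('a \<times> 'b \<times> 'c) set" where
  "Tset x1 y1 x2 y2 x3 z3 A B C D E = aseq x1 y1 x2 y2 x3 z3 A B C D E ` {1..}"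

end

theory Submission
  imports Defs
begin

text \<open>
  Call a set S extendable if some sum function d1(w1) + d2(w2) + d3(w3)
  vanishes on S but not on the whole box proj1 S \<times> proj2 S \<times> proj3 S.  A good set is
  full exactly when it is not extendable.  So the theorem reduces to three facts about T:
  T is good, T is not extendable, and every finite subset of T with at least two points
  is extendable (hence not full, so distinct points are never related).

  It then studies the canonical model of the construction, in which every element is
  replaced by a label (kind, index); there T is shown to be good and not extendable by
  solving the linear system along the blocks of five points, and finite subsets are shown
  extendable by induction on the largest index, using either a fresh coordinate or an
  explicit certificate supported on one block.
\<close>

text \<open>For good sets this is exactly
  the failure of fullness: the nonzero box point can be added to S.\<close>

definition extendable :: "('a \<times> 'b \<times> 'c) set \<Rightarrow> bool" where
  "extendable S \<longleftrightarrow> (\<exists>d1 d2 d3.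
     (\<forall>w\<in>S. d1 (fst w) + d2 (fst (snd w)) + d3 (snd (snd w)) = (0::complex)) \<and>
     (\<exists>w1\<in>proj1 S. \<exists>w2\<in>proj2 S. \<exists>w3\<in>proj3 S. d1 w1 + d2 w2 + d3 w3 \<noteq> 0))"

lemma extendableI:
  assumes "\<forall>w\<in>S. d1 (fst w) + d2 (fst (snd w)) + d3 (snd (snd w)) = (0::complex)"
    and "w1 \<in> proj1 S" "w2 \<in> proj2 S" "w3 \<in> proj3 S" and "d1 w1 + d2 w2 + d3 w3 \<noteq> 0"
  shows "extendable S"
  unfolding extendable_def using assms by blast

lemma extendableE:
  assumes "extendable S"
  obtains d1 d2 d3 w1 w2 w3
  where "\<forall>w\<in>S. d1 (fst w) + d2 (fst (snd w)) + d3 (snd (snd w)) = (0::complex)"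
    and "w1 \<in> proj1 S" "w2 \<in> proj2 S" "w3 \<in> proj3 S" and "d1 w1 + d2 w2 + d3 w3 \<noteq> 0"
  using assms unfolding extendable_def by blast

lemma subset_box: "S \<subseteq> proj1 S \<times> proj2 S \<times> proj3 S"
  unfolding proj1_def proj2_def proj3_def by force

text \<open>A good extendable set is not full: adding a box point p where the certificate d is
  nonzero keeps the set good, since any prescribed value at p can be reached by adding a
  multiple of d to a representation on S.\<close>

lemma extendable_not_full:
  assumes good: "good X1 X2 X3 S" and ext: "extendable S"
  shows "\<not> full X1 X2 X3 S"
proof
  assume full: "full X1 X2 X3 S"
  obtain d1 d2 d3 w1 w2 w3
    where d: "\<forall>w\<in>S. d1 (fst w) + d2 (fst (snd w)) + d3 (snd (snd w)) = (0::complex)"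
      and w: "w1 \<in> proj1 S" "w2 \<in> proj2 S" "w3 \<in> proj3 S"
      and nz: "d1 w1 + d2 w2 + d3 w3 \<noteq> 0"
    using ext by (rule extendableE)
  have new: "(w1, w2, w3) \<notin> S" using d nz by force
  have "proj1 S \<subseteq> X1" "proj2 S \<subseteq> X2" "proj3 S \<subseteq> X3"
    using good unfolding good_def proj1_def proj2_def proj3_def by auto
  then have in_X: "insert (w1, w2, w3) S \<subseteq> X1 \<times> X2 \<times> X3"
    using w good unfolding good_def by auto
  have in_box: "insert (w1, w2, w3) S \<subseteq> proj1 S \<times> proj2 S \<times> proj3 S"
    using w subset_box by blast
  have "good X1 X2 X3 (insert (w1, w2, w3) S)"
    unfolding good_def
  proof (intro conjI in_X allI)
    fix f :: "'a \<times> 'b \<times> 'c \<Rightarrow> complex"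
    obtain u1 u2 u3
      where u: "\<forall>v1 v2 v3. (v1, v2, v3) \<in> S \<longrightarrow> f (v1, v2, v3) = u1 v1 + u2 v2 + u3 v3"
      using good unfolding good_def by blast
    define c where "c = (f (w1, w2, w3) - (u1 w1 + u2 w2 + u3 w3)) / (d1 w1 + d2 w2 + d3 w3)"
    have shift: "(u1 v1 + c * d1 v1) + (u2 v2 + c * d2 v2) + (u3 v3 + c * d3 v3)
        = (u1 v1 + u2 v2 + u3 v3) + c * (d1 v1 + d2 v2 + d3 v3)" for v1 v2 v3
      by (simp add: algebra_simps)
    show "\<exists>u1 u2 u3. \<forall>v1 v2 v3. (v1, v2, v3) \<in> insert (w1, w2, w3) S
        \<longrightarrow> f (v1, v2, v3) = u1 v1 + u2 v2 + u3 v3"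
    proof (intro exI allI impI)
      fix v1 v2 v3 assume "(v1, v2, v3) \<in> insert (w1, w2, w3) S"
      then consider "(v1, v2, v3) = (w1, w2, w3)" | "(v1, v2, v3) \<in> S" by blast
      then show "f (v1, v2, v3) = (u1 v1 + c * d1 v1) + (u2 v2 + c * d2 v2) + (u3 v3 + c * d3 v3)"
      proof cases
        case 1
        have "(u1 w1 + u2 w2 + u3 w3) + c * (d1 w1 + d2 w2 + d3 w3) = f (w1, w2, w3)"
          using nz unfolding c_def by simp
        then show ?thesis using 1 by (simp add: algebra_simps)
      next
        case 2
        then show ?thesis using u d shift by force
      qed
    qed
  qed
  then have "insert (w1, w2, w3) S = S" using full in_box unfolding full_def by blast
  then show False using new by blast
qed

text \<open>Conversely, a good set that is not extendable is full: if a box point p could be added,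
  the indicator function of p would be a sum function vanishing on S but not at p.\<close>

lemma full_if_not_extendable:
  assumes good: "good X1 X2 X3 S" and not_ext: "\<not> extendable S"
  shows "full X1 X2 X3 S"
  unfolding full_def
proof (intro conjI good allI impI)
  fix S' assume S': "S \<subseteq> S' \<and> S' \<subseteq> proj1 S \<times> proj2 S \<times> proj3 S \<and> good X1 X2 X3 S'"
  show "S' = S"
  proof (rule ccontr)
    assume "S' \<noteq> S"
    then obtain w1 w2 w3 where w: "(w1, w2, w3) \<in> S'" "(w1, w2, w3) \<notin> S" using S' by auto
    have "\<forall>f :: 'a \<times> 'b \<times> 'c \<Rightarrow> complex. \<exists>u1 u2 u3.
        \<forall>v1 v2 v3. (v1, v2, v3) \<in> S' \<longrightarrow> f (v1, v2, v3) = u1 v1 + u2 v2 + u3 v3"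
      using S' unfolding good_def by blast
    from spec[OF this, of "\<lambda>v. if v = (w1, w2, w3) then 1 else 0"]
    obtain u1 u2 u3 where u: "\<forall>v1 v2 v3. (v1, v2, v3) \<in> S' \<longrightarrow>
        (if (v1, v2, v3) = (w1, w2, w3) then 1 else 0 :: complex) = u1 v1 + u2 v2 + u3 v3"
      by blast
    have "\<forall>v\<in>S. u1 (fst v) + u2 (fst (snd v)) + u3 (snd (snd v)) = 0"
    proof
      fix v assume v: "v \<in> S"
      obtain v1 v2 v3 where v_eq: "v = (v1, v2, v3)" by (cases v)
      have "(v1, v2, v3) \<in> S'" "(v1, v2, v3) \<noteq> (w1, w2, w3)" using v v_eq S' w(2) by auto
      then show "u1 (fst v) + u2 (fst (snd v)) + u3 (snd (snd v)) = 0"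
        using u[rule_format, of v1 v2 v3] v_eq by (auto split: if_splits)
    qed
    moreover have "u1 w1 + u2 w2 + u3 w3 \<noteq> 0" using u w by force
    moreover have "w1 \<in> proj1 S" "w2 \<in> proj2 S" "w3 \<in> proj3 S" using S' w by auto
    ultimately have "extendable S" by (intro extendableI)
    with not_ext show False ..
  qed
qed

lemma full_singleton: "p \<in> X1 \<times> X2 \<times> X3 \<Longrightarrow> full X1 X2 X3 {p}"
proof (rule full_if_not_extendable)
  assume p: "p \<in> X1 \<times> X2 \<times> X3"
  show "good X1 X2 X3 {p}"
    unfolding good_def
  proof (intro conjI allI)
    fix f :: "_ \<Rightarrow> complex"
    show "\<exists>u1 u2 u3. \<forall>w1 w2 w3. (w1, w2, w3) \<in> {p} \<longrightarrow> f (w1, w2, w3) = u1 w1 + u2 w2 + u3 w3"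
      by (rule exI[of _ "\<lambda>_. f p"], rule exI[of _ "\<lambda>_. 0"], rule exI[of _ "\<lambda>_. 0"]) auto
  qed (use p in simp)
  show "\<not> extendable {p}"
    unfolding extendable_def proj1_def proj2_def proj3_def by (cases p) auto
qed

text \<open>Extendability survives adding a point with a coordinate not yet used: the certificate
  is modified at the new coordinate value only, where it is forced to cancel.\<close>

lemma extendable_insert_fresh:
  assumes ext: "extendable S"
    and fresh: "t1 \<notin> proj1 S \<or> t2 \<notin> proj2 S \<or> t3 \<notin> proj3 S"
  shows "extendable (insert (t1, t2, t3) S)"
proof -
  obtain d1 d2 d3 w1 w2 w3
    where d: "\<forall>w\<in>S. d1 (fst w) + d2 (fst (snd w)) + d3 (snd (snd w)) = (0::complex)"
      and w: "w1 \<in> proj1 S" "w2 \<in> proj2 S" "w3 \<in> proj3 S"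
      and nz: "d1 w1 + d2 w2 + d3 w3 \<noteq> 0"
    using ext by (rule extendableE)
  have box: "proj1 S \<subseteq> proj1 (insert t S)" "proj2 S \<subseteq> proj2 (insert t S)"
    "proj3 S \<subseteq> proj3 (insert t S)" for t
    unfolding proj1_def proj2_def proj3_def by auto
  from fresh consider "t1 \<notin> proj1 S" | "t2 \<notin> proj2 S" | "t3 \<notin> proj3 S" by blast
  then show ?thesis
  proof cases
    case 1
    then have "\<forall>w\<in>S. fst w \<noteq> t1" "w1 \<noteq> t1" using w unfolding proj1_def by force+
    then show ?thesis unfolding extendable_def
      by (intro exI[of _ "d1(t1 := - (d2 t2 + d3 t3))"] exI[of _ d2] exI[of _ d3])
        (use d w nz box in fastforce)
  next
    case 2
    then have "\<forall>w\<in>S. fst (snd w) \<noteq> t2" "w2 \<noteq> t2" using w unfolding proj2_def by force+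
    then show ?thesis unfolding extendable_def
      by (intro exI[of _ d1] exI[of _ "d2(t2 := - (d1 t1 + d3 t3))"] exI[of _ d3])
        (use d w nz box in fastforce)
  next
    case 3
    then have "\<forall>w\<in>S. snd (snd w) \<noteq> t3" "w3 \<noteq> t3" using w unfolding proj3_def by force+
    then show ?thesis unfolding extendable_def
      by (intro exI[of _ d1] exI[of _ d2] exI[of _ "d3(t3 := - (d1 t1 + d2 t2))"])
        (use d w nz box in fastforce)
  qed
qed

lemma extendable_pair:
  assumes "\<not> (p1 = q1 \<and> p2 = q2)" "\<not> (p1 = q1 \<and> p3 = q3)" "\<not> (p2 = q2 \<and> p3 = q3)"
  shows "extendable {(p1, p2, p3), (q1, q2, q3)}"
proof -
  let ?ind = "\<lambda>t x. if x = t then 1 else 0 :: complex"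
  have box: "proj1 {(p1, p2, p3), (q1, q2, q3)} = {p1, q1}"
    "proj2 {(p1, p2, p3), (q1, q2, q3)} = {p2, q2}" "proj3 {(p1, p2, p3), (q1, q2, q3)} = {p3, q3}"
    unfolding proj1_def proj2_def proj3_def by auto
  consider "p2 \<noteq> q2" "p3 \<noteq> q3" | "p1 \<noteq> q1" "p2 \<noteq> q2" | "p1 \<noteq> q1" "p3 \<noteq> q3"
    using assms by blast
  then show ?thesis
  proof cases
    case 1
    then show ?thesis unfolding extendable_def box
      by (intro exI[of _ "\<lambda>_. 0"] exI[of _ "?ind p2"] exI[of _ "\<lambda>x. - ?ind p3 x"]) auto
  next
    case 2
    then show ?thesis unfolding extendable_def box
      by (intro exI[of _ "?ind p1"] exI[of _ "\<lambda>x. - ?ind p2 x"] exI[of _ "\<lambda>_. 0"]) auto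
  next
    case 3
    then show ?thesis unfolding extendable_def box
      by (intro exI[of _ "?ind p1"] exI[of _ "\<lambda>_. 0"] exI[of _ "\<lambda>x. - ?ind p3 x"]) auto
  qed
qed

lemma full_components_of_full:
  assumes "full X1 X2 X3 S"
  shows "full_components X1 X2 X3 S = {S}"
  using assms unfolding full_components_def by blast

lemma related_iff_eq:
  assumes sub: "S \<subseteq> X1 \<times> X2 \<times> X3"
    and ext: "\<And>F. F \<subseteq> S \<Longrightarrow> finite F \<Longrightarrow> 2 \<le> card F \<Longrightarrow> extendable F"
    and p: "p \<in> S" and q: "q \<in> S"
  shows "related X1 X2 X3 S p q \<longleftrightarrow> p = q"
proof
  assume "related X1 X2 X3 S p q"
  then obtain F where F: "finite F" "F \<subseteq> S" "full X1 X2 X3 F" "p \<in> F" "q \<in> F"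
    unfolding related_def by blast
  show "p = q"
  proof (rule ccontr)
    assume "p \<noteq> q"
    then have "2 \<le> card F" using F card_mono[of F "{p, q}"] by auto
    then have "extendable F" using ext F by blast
    moreover have "good X1 X2 X3 F" using F(3) unfolding full_def by blast
    ultimately show False using extendable_not_full F(3) by blast
  qed
next
  assume "p = q"
  then show "related X1 X2 X3 S p q"
    using p sub full_singleton[of p] unfolding related_def by (intro exI[of _ "{p}"]) auto
qed

lemma related_components_singletons:
  assumes "\<And>p q. p \<in> S \<Longrightarrow> q \<in> S \<Longrightarrow> related X1 X2 X3 S p q \<longleftrightarrow> p = q"
  shows "related_components X1 X2 X3 S = (\<lambda>p. {p}) ` S"
proof -
  have "{q \<in> S. related X1 X2 X3 S p q} = {p}" if "p \<in> S" for p
    using assms that by blast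
  then have "related_components X1 X2 X3 S = {{p} | p. p \<in> S}"
    unfolding related_components_def by (metis (no_types, lifting))
  also have "\<dots> = (\<lambda>p. {p}) ` S" by (rule Setcompr_eq_image)
  finally show ?thesis .
qed

abbreviation map3 :: "('a \<Rightarrow> 'd) \<Rightarrow> ('b \<Rightarrow> 'e) \<Rightarrow> ('c \<Rightarrow> 'f) \<Rightarrow> 'a \<times> 'b \<times> 'c \<Rightarrow> 'd \<times> 'e \<times> 'f"
  where "map3 V1 V2 V3 \<equiv> map_prod V1 (map_prod V2 V3)"

lemma proj_map3:
  "proj1 (map3 V1 V2 V3 ` S) = V1 ` proj1 S" "proj2 (map3 V1 V2 V3 ` S) = V2 ` proj2 S"
  "proj3 (map3 V1 V2 V3 ` S) = V3 ` proj3 S"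
  unfolding proj1_def proj2_def proj3_def image_image by simp_all

lemma inj_on_map3:
  assumes "inj_on V1 (proj1 S)" "inj_on V2 (proj2 S)" "inj_on V3 (proj3 S)"
  shows "inj_on (map3 V1 V2 V3) S"
proof (rule inj_onI)
  fix v w assume v: "v \<in> S" and w: "w \<in> S" and eq: "map3 V1 V2 V3 v = map3 V1 V2 V3 w"
  have "fst v \<in> proj1 S" "fst w \<in> proj1 S" "fst (snd v) \<in> proj2 S" "fst (snd w) \<in> proj2 S"
    "snd (snd v) \<in> proj3 S" "snd (snd w) \<in> proj3 S"
    using v w unfolding proj1_def proj2_def proj3_def by auto
  moreover have "V1 (fst v) = V1 (fst w)" "V2 (fst (snd v)) = V2 (fst (snd w))"
    "V3 (snd (snd v)) = V3 (snd (snd w))"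
    using eq by (simp_all add: map_prod_def split_beta)
  ultimately show "v = w" using assms by (simp add: prod_eq_iff inj_on_eq_iff)
qed

lemma good_map3:
  assumes good: "good UNIV UNIV UNIV S"
    and inj: "inj_on V1 (proj1 S)" "inj_on V2 (proj2 S)" "inj_on V3 (proj3 S)"
    and sub: "map3 V1 V2 V3 ` S \<subseteq> X1 \<times> X2 \<times> X3"
  shows "good X1 X2 X3 (map3 V1 V2 V3 ` S)"
  unfolding good_def
proof (intro conjI sub allI)
  fix f :: "_ \<Rightarrow> complex"
  obtain u1 u2 u3 where u: "\<forall>w1 w2 w3. (w1, w2, w3) \<in> S \<longrightarrow>
      (f \<circ> map3 V1 V2 V3) (w1, w2, w3) = u1 w1 + u2 w2 + u3 w3"
    using good unfolding good_def by blast
  show "\<exists>u1 u2 u3. \<forall>v1 v2 v3. (v1, v2, v3) \<in> map3 V1 V2 V3 ` S \<longrightarrow>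
      f (v1, v2, v3) = u1 v1 + u2 v2 + u3 v3"
  proof (intro exI allI impI)
    fix v1 v2 v3 assume "(v1, v2, v3) \<in> map3 V1 V2 V3 ` S"
    then obtain w1 w2 w3 where w: "(w1, w2, w3) \<in> S" "v1 = V1 w1" "v2 = V2 w2" "v3 = V3 w3"
      by auto
    then have "w1 \<in> proj1 S" "w2 \<in> proj2 S" "w3 \<in> proj3 S"
      unfolding proj1_def proj2_def proj3_def by force+
    then show "f (v1, v2, v3) = (u1 \<circ> inv_into (proj1 S) V1) v1
        + (u2 \<circ> inv_into (proj2 S) V2) v2 + (u3 \<circ> inv_into (proj3 S) V3) v3"
      using u w inj by (simp add: inv_into_f_f)
  qed
qed

lemma extendable_map3:
  assumes ext: "extendable S"
    and inj: "inj_on V1 (proj1 S)" "inj_on V2 (proj2 S)" "inj_on V3 (proj3 S)"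
  shows "extendable (map3 V1 V2 V3 ` S)"
proof -
  obtain d1 d2 d3 w1 w2 w3
    where d: "\<forall>w\<in>S. d1 (fst w) + d2 (fst (snd w)) + d3 (snd (snd w)) = (0::complex)"
      and w: "w1 \<in> proj1 S" "w2 \<in> proj2 S" "w3 \<in> proj3 S"
      and nz: "d1 w1 + d2 w2 + d3 w3 \<noteq> 0"
    using ext by (rule extendableE)
  let ?e1 = "d1 \<circ> inv_into (proj1 S) V1" and ?e2 = "d2 \<circ> inv_into (proj2 S) V2"
    and ?e3 = "d3 \<circ> inv_into (proj3 S) V3"
  have "?e1 (V1 w1) + ?e2 (V2 w2) + ?e3 (V3 w3) \<noteq> 0" using w nz inj by (simp add: inv_into_f_f)
  moreover have "\<forall>v\<in>map3 V1 V2 V3 ` S. ?e1 (fst v) + ?e2 (fst (snd v)) + ?e3 (snd (snd v)) = 0"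
  proof
    fix v assume "v \<in> map3 V1 V2 V3 ` S"
    then obtain w where w: "v = map3 V1 V2 V3 w" "w \<in> S" by (rule imageE)
    then have "fst w \<in> proj1 S" "fst (snd w) \<in> proj2 S" "snd (snd w) \<in> proj3 S"
      unfolding proj1_def proj2_def proj3_def by auto
    then show "?e1 (fst v) + ?e2 (fst (snd v)) + ?e3 (snd (snd v)) = 0"
      using d w inj by (simp add: inv_into_f_f)
  qed
  moreover have "V1 w1 \<in> proj1 (map3 V1 V2 V3 ` S)" "V2 w2 \<in> proj2 (map3 V1 V2 V3 ` S)"
    "V3 w3 \<in> proj3 (map3 V1 V2 V3 ` S)"
    unfolding proj_map3 using w by auto
  ultimately show ?thesis by (intro extendableI)
qed

lemma extendable_map3_back:
  assumes "extendable (map3 V1 V2 V3 ` S)"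
  shows "extendable S"
proof -
  obtain e1 e2 e3 v1 v2 v3
    where e: "\<forall>v\<in>map3 V1 V2 V3 ` S. e1 (fst v) + e2 (fst (snd v)) + e3 (snd (snd v)) = (0::complex)"
      and v: "v1 \<in> proj1 (map3 V1 V2 V3 ` S)" "v2 \<in> proj2 (map3 V1 V2 V3 ` S)"
        "v3 \<in> proj3 (map3 V1 V2 V3 ` S)"
      and nz: "e1 v1 + e2 v2 + e3 v3 \<noteq> 0"
    using assms by (rule extendableE)
  obtain w1 w2 w3 where w: "w1 \<in> proj1 S" "w2 \<in> proj2 S" "w3 \<in> proj3 S"
    and vw: "v1 = V1 w1" "v2 = V2 w2" "v3 = V3 w3"
    using v unfolding proj_map3 by (elim imageE) simp
  have vanish: "\<forall>w\<in>S. (e1 \<circ> V1) (fst w) + (e2 \<circ> V2) (fst (snd w)) + (e3 \<circ> V3) (snd (snd w)) = 0"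
  proof
    fix w assume "w \<in> S"
    then show "(e1 \<circ> V1) (fst w) + (e2 \<circ> V2) (fst (snd w)) + (e3 \<circ> V3) (snd (snd w)) = 0"
      using e by simp
  qed
  have "(e1 \<circ> V1) w1 + (e2 \<circ> V2) w2 + (e3 \<circ> V3) w3 \<noteq> 0" using nz vw by simp
  with vanish w show ?thesis by (intro extendableI)
qed

lemma aseq_initial:
  "aseq x1 y1 x2 y2 x3 z3 A B C D E 1 = (x1, x2, x3)"
  "aseq x1 y1 x2 y2 x3 z3 A B C D E 2 = (y1, y2, x3)"
  "aseq x1 y1 x2 y2 x3 z3 A B C D E 3 = (y1, x2, z3)"
  by (simp_all add: aseq_def)

lemma aseq_block:
  "aseq x1 y1 x2 y2 x3 z3 A B C D E (5*k+4) = (A (k+1), C (k+1), E (k+1))"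
  "aseq x1 y1 x2 y2 x3 z3 A B C D E (5*k+5) = (B (k+1), D (k+1), E (k+1))"
  "aseq x1 y1 x2 y2 x3 z3 A B C D E (5*k+6) = (A (k+1), D (k+1), extE z3 E k)"
  "aseq x1 y1 x2 y2 x3 z3 A B C D E (5*k+7) = (B (k+1), C (k+1), x3)"
  "aseq x1 y1 x2 y2 x3 z3 A B C D E (5*k+8) = (x1, extC y2 C k, E (k+1))"
proof -
  have "(5*k+4+1) div 5 = k+1" "(5*k+4+1) mod 5 = 0" "(5*k+5+1) div 5 = k+1" "(5*k+5+1) mod 5 = 1"
    "(5*k+6+1) div 5 = k+1" "(5*k+6+1) mod 5 = 2" "(5*k+7+1) div 5 = k+1" "(5*k+7+1) mod 5 = 3"
    "(5*k+8+1) div 5 = k+1" "(5*k+8+1) mod 5 = 4"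
    by presburger+
  then show "aseq x1 y1 x2 y2 x3 z3 A B C D E (5*k+4) = (A (k+1), C (k+1), E (k+1))"
    "aseq x1 y1 x2 y2 x3 z3 A B C D E (5*k+5) = (B (k+1), D (k+1), E (k+1))"
    "aseq x1 y1 x2 y2 x3 z3 A B C D E (5*k+6) = (A (k+1), D (k+1), extE z3 E k)"
    "aseq x1 y1 x2 y2 x3 z3 A B C D E (5*k+7) = (B (k+1), C (k+1), x3)"
    "aseq x1 y1 x2 y2 x3 z3 A B C D E (5*k+8) = (x1, extC y2 C k, E (k+1))"
    unfolding aseq_def Let_def by simp_all
qed

lemma index_cases:
  assumes "1 \<le> (i::nat)"
  obtains "i = 1" | "i = 2" | "i = 3" | k where "i = 5*k+4" | k where "i = 5*k+5"
   | k where "i = 5*k+6" | k where "i = 5*k+7" | k where "i = 5*k+8"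
proof -
  have "i = 1 \<or> i = 2 \<or> i = 3 \<or> (\<exists>k. i = 5*k+4 \<or> i = 5*k+5 \<or> i = 5*k+6 \<or> i = 5*k+7 \<or> i = 5*k+8)"
    using assms by presburger
  then show ?thesis using that by blast
qed

text \<open>Each element of X1, X2, X3 used by T is
  named by a label (kind, index): kind 0 for x1/x2/x3, kind 1 for y1, kind 2 for the
  family A/C/E (with y2 = C 0 and z3 = E 0 as in the paper's convention), kind 3 for the
  family B/D.  The sequence lab is the construction applied to these labels; the actual
  set T is a relabelling of it, so all combinatorics can be done on labels.\<close>

type_synonym label = "nat \<times> nat"

definition lab :: "nat \<Rightarrow> label \<times> label \<times> label" where
  "lab = aseq (0,0) (1,0) (0,0) (2,0) (0,0) (2,0) (Pair 2) (Pair 3) (Pair 2) (Pair 3) (Pair 2)"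

abbreviation lab1 :: "nat \<Rightarrow> label" where "lab1 i \<equiv> fst (lab i)"
abbreviation lab2 :: "nat \<Rightarrow> label" where "lab2 i \<equiv> fst (snd (lab i))"
abbreviation lab3 :: "nat \<Rightarrow> label" where "lab3 i \<equiv> snd (snd (lab i))"

lemma lab_values:
  "lab 1 = ((0,0), (0,0), (0,0))" "lab (Suc 0) = ((0,0), (0,0), (0,0))"
  "lab 2 = ((1,0), (2,0), (0,0))" "lab 3 = ((1,0), (0,0), (2,0))"
  "lab (5*k+4) = ((2,k+1), (2,k+1), (2,k+1))"
  "lab (5*k+5) = ((3,k+1), (3,k+1), (2,k+1))"
  "lab (5*k+6) = ((2,k+1), (3,k+1), (2,k))"
  "lab (5*k+7) = ((3,k+1), (2,k+1), (0,0))"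
  "lab (5*k+8) = ((0,0), (2,k), (2,k+1))"
  by (simp_all add: lab_def aseq_initial[simplified] aseq_block extC_def extE_def)

lemma lab_share_at_most_one:
  assumes "1 \<le> j" "j < m"
  shows "\<not> (lab1 j = lab1 m \<and> lab2 j = lab2 m)" "\<not> (lab1 j = lab1 m \<and> lab3 j = lab3 m)"
    "\<not> (lab2 j = lab2 m \<and> lab3 j = lab3 m)"
proof -
  have m: "1 \<le> m" using assms by simp
  show "\<not> (lab1 j = lab1 m \<and> lab2 j = lab2 m)" "\<not> (lab1 j = lab1 m \<and> lab3 j = lab3 m)"
    "\<not> (lab2 j = lab2 m \<and> lab3 j = lab3 m)"
    by (rule index_cases[OF assms(1)]; rule index_cases[OF m]; insert assms; hypsubst;
        simp only: lab_values fst_conv snd_conv; auto)+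
qed

lemma lab_inj: "inj_on lab {1..}"
proof (rule inj_onI)
  fix i j assume "i \<in> {1..}" "j \<in> {1..}" "lab i = lab j"
  then show "i = j"
    using lab_share_at_most_one(1)[of i j] lab_share_at_most_one(1)[of j i]
    by (cases i j rule: linorder_cases) auto
qed

lemma lab_first_occurrence:
  assumes "1 \<le> j"
  shows "j < 3 \<Longrightarrow> lab3 j \<noteq> lab3 3"
    "j < 5*k+4 \<Longrightarrow> lab1 j \<noteq> lab1 (5*k+4)"
    "j < 5*k+5 \<Longrightarrow> lab1 j \<noteq> lab1 (5*k+5)"
  by (rule index_cases[OF assms]; hypsubst; simp only: lab_values fst_conv snd_conv; auto)+

lemma lab3_repetition:
  assumes "1 \<le> j" "j < m" "lab3 j = lab3 m"
  shows "m = 5*k+6 \<Longrightarrow> j \<le> 5*k+3" "m = 5*k+7 \<Longrightarrow> j \<le> 5*k+3"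
    "m = 5*k+8 \<Longrightarrow> 5*k+4 \<le> j \<and> j \<le> 5*k+7"
  by (rule index_cases[OF assms(1)]; insert assms; hypsubst; simp only: lab_values fst_conv snd_conv; auto)+

lemma lab1_block:
  assumes "1 \<le> l"
  shows "lab1 l \<in> {(2,k+1), (3,k+1)} \<longleftrightarrow> l \<in> {5*k+4..5*k+7}"
  by (rule index_cases[OF assms]; hypsubst; simp only: lab_values fst_conv snd_conv; simp; presburger)

lemma lab2_block:
  assumes "1 \<le> l" "l \<le> 5*k+8"
  shows "lab2 l \<in> {(2,k+1), (3,k+1)} \<longleftrightarrow> l \<in> {5*k+4..5*k+7}"
  by (rule index_cases[OF assms(1)]; insert assms(2); hypsubst; simp only: lab_values fst_conv snd_conv; simp; presburger)

lemma proj_lab: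
  "proj1 (lab ` I) = lab1 ` I" "proj2 (lab ` I) = lab2 ` I" "proj3 (lab ` I) = lab3 ` I"
  unfolding proj1_def proj2_def proj3_def image_image by (rule refl)+

text \<open>A certificate from block k: the sum function with d1 = -1 on A(k+1), B(k+1) and
  d2 = 1 on C(k+1), D(k+1) vanishes on a_1, ..., a_(5k+8) but equals 1 at a box point
  mixing a block index with a non-block index.\<close>

lemma block_certificate:
  assumes I: "I \<subseteq> {1..5*k+8}"
    and j: "j \<in> I" "j \<in> {5*k+4..5*k+7}" and i: "i \<in> I" "i \<notin> {5*k+4..5*k+7}"
  shows "extendable (lab ` I)"
proof -
  let ?B = "{(2,k+1), (3,k+1)} :: label set"
  define d1 where "d1 l = (if l \<in> ?B then -1 else 0 :: complex)" for l
  define d2 where "d2 l = (if l \<in> ?B then 1 else 0 :: complex)" for l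
  have "\<forall>w\<in>lab ` I. d1 (fst w) + d2 (fst (snd w)) + (\<lambda>_. 0) (snd (snd w)) = 0"
  proof
    fix w assume "w \<in> lab ` I"
    then obtain l where l: "w = lab l" "l \<in> I" by blast
    then have "1 \<le> l" "l \<le> 5*k+8" using I by auto
    then show "d1 (fst w) + d2 (fst (snd w)) + (\<lambda>_. 0) (snd (snd w)) = 0"
      using lab1_block[of l k] lab2_block[of l k] unfolding l(1) d1_def d2_def by auto
  qed
  moreover have "lab1 i \<in> proj1 (lab ` I)" "lab2 j \<in> proj2 (lab ` I)" "lab3 i \<in> proj3 (lab ` I)"
    unfolding proj_lab using i j by auto
  moreover have "d1 (lab1 i) + d2 (lab2 j) + (\<lambda>_. 0) (lab3 i) \<noteq> 0"
    using I i j lab1_block[of i k] lab2_block[of j k] unfolding d1_def d2_def by auto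
  ultimately show ?thesis by (rule extendableI)
qed

lemma new_point_cases:
  assumes I: "I \<subseteq> {1..<m}" and m: "3 \<le> m"
  obtains "\<forall>j\<in>I. lab1 j \<noteq> lab1 m" | "\<forall>j\<in>I. lab3 j \<noteq> lab3 m"
    | k j i where "insert m I \<subseteq> {1..5*k+8}" "j \<in> insert m I" "j \<in> {5*k+4..5*k+7}"
        "i \<in> insert m I" "i \<notin> {5*k+4..5*k+7}"
proof -
  have I_lt: "1 \<le> j" "j < m" if "j \<in> I" for j using I that by auto
  have m1: "1 \<le> m" using m by simp
  have sub: "insert m I \<subseteq> {1..5*k+8}" if "m \<le> 5*k+8" for k using I m1 that by auto
  show thesis
  proof (rule index_cases[OF m1])
    assume "m = 1" with m show thesis by simp
  next
    assume "m = 2" with m show thesis by simp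
  next
    assume "m = 3"
    then have "\<forall>j\<in>I. lab3 j \<noteq> lab3 m" using I_lt lab_first_occurrence(1) by blast
    then show thesis by (rule that(2))
  next
    fix k assume "m = 5*k+4"
    then have "\<forall>j\<in>I. lab1 j \<noteq> lab1 m" using I_lt lab_first_occurrence(2) by blast
    then show thesis by (rule that(1))
  next
    fix k assume "m = 5*k+5"
    then have "\<forall>j\<in>I. lab1 j \<noteq> lab1 m" using I_lt lab_first_occurrence(3) by blast
    then show thesis by (rule that(1))
  next
    fix k assume mk: "m = 5*k+6"
    show thesis
    proof (cases "\<forall>j\<in>I. lab3 j \<noteq> lab3 m")
      case False
      then obtain j where j: "j \<in> I" "lab3 j = lab3 m" by blast
      then have "j \<le> 5*k+3" using I_lt lab3_repetition(1)[of j m k] mk by auto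
      then show thesis using that(3)[of k m j] sub[of k] mk j(1) by auto
    qed (rule that(2))
  next
    fix k assume mk: "m = 5*k+7"
    show thesis
    proof (cases "\<forall>j\<in>I. lab3 j \<noteq> lab3 m")
      case False
      then obtain j where j: "j \<in> I" "lab3 j = lab3 m" by blast
      then have "j \<le> 5*k+3" using I_lt lab3_repetition(2)[of j m k] mk by auto
      then show thesis using that(3)[of k m j] sub[of k] mk j(1) by auto
    qed (rule that(2))
  next
    fix k assume mk: "m = 5*k+8"
    show thesis
    proof (cases "\<forall>j\<in>I. lab3 j \<noteq> lab3 m")
      case False
      then obtain j where j: "j \<in> I" "lab3 j = lab3 m" by blast
      then have "5*k+4 \<le> j" "j \<le> 5*k+7" using I_lt lab3_repetition(3)[of j m k] mk by auto
      then show thesis using that(3)[of k j m] sub[of k] mk j(1) by auto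
    qed (rule that(2))
  qed
qed

lemma lab_finite_subsets_extendable:
  assumes "finite I" "I \<subseteq> {1..}" "2 \<le> card I"
  shows "extendable (lab ` I)"
  using assms
proof (induction I rule: finite_linorder_max_induct)
  case empty
  then show ?case by simp
next
  case (insert m I)
  have I: "I \<subseteq> {1..<m}" using insert.hyps(2) insert.prems(1) by auto
  have m_new: "m \<notin> I" using insert.hyps(2) by blast
  have lab_insert: "lab ` insert m I = insert (lab1 m, lab2 m, lab3 m) (lab ` I)" by simp
  show ?case
  proof (cases "card I \<le> 1")
    case True
    then have "card I = 1" using insert.prems(2) insert.hyps(1) m_new by simp
    then obtain j where j: "I = {j}" by (rule card_1_singletonE)
    then have "1 \<le> j" "j < m" using I by auto
    then have "\<not> (lab1 j = lab1 m \<and> lab2 j = lab2 m)" "\<not> (lab1 j = lab1 m \<and> lab3 j = lab3 m)"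
      "\<not> (lab2 j = lab2 m \<and> lab3 j = lab3 m)"
      by (rule lab_share_at_most_one)+
    then have "extendable {(lab1 j, lab2 j, lab3 j), (lab1 m, lab2 m, lab3 m)}"
      by (rule extendable_pair)
    then show ?thesis unfolding j by (simp add: insert_commute)
  next
    case False
    then have IH: "extendable (lab ` I)" using insert.IH insert.prems(1) by simp
    have "card I \<le> card {1..<m}" using I by (rule card_mono[rotated]) simp
    then have m3: "3 \<le> m" using False by simp
    from I m3 show ?thesis
    proof (rule new_point_cases)
      assume "\<forall>j\<in>I. lab1 j \<noteq> lab1 m"
      then have "lab1 m \<notin> proj1 (lab ` I)" unfolding proj_lab by auto
      then show ?thesis unfolding lab_insert by (intro extendable_insert_fresh[OF IH]) simp
    next
      assume "\<forall>j\<in>I. lab3 j \<noteq> lab3 m"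
      then have "lab3 m \<notin> proj3 (lab ` I)" unfolding proj_lab by auto
      then show ?thesis unfolding lab_insert by (intro extendable_insert_fresh[OF IH]) simp
    next
      fix k j i assume "insert m I \<subseteq> {1..5*k+8}" "j \<in> insert m I" "j \<in> {5*k+4..5*k+7}"
        "i \<in> insert m I" "i \<notin> {5*k+4..5*k+7}"
      then show ?thesis by (rule block_certificate)
    qed
  qed
qed

text \<open>The blocks force g3(2,k) - g3(0,0) = 2 (g3(2,k+1) - g3(0,0)), the initial points force
  g3(2,1) = g3(0,0), and everything else follows.\<close>

lemma lab_sum_vanishing_constant:
  fixes g1 g2 g3 :: "label \<Rightarrow> complex"
  assumes h: "\<And>i. 1 \<le> i \<Longrightarrow> g1 (lab1 i) + g2 (lab2 i) + g3 (lab3 i) = 0"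
  shows "\<And>i. 1 \<le> i \<Longrightarrow> g1 (lab1 i) = g1 (0,0)" "\<And>i. 1 \<le> i \<Longrightarrow> g2 (lab2 i) = g2 (0,0)"
    "\<And>i. 1 \<le> i \<Longrightarrow> g3 (lab3 i) = g3 (0,0)" "g1 (0,0) + g2 (0,0) + g3 (0,0) = 0"
proof -
  have b4: "g1 (2,k+1) + g2 (2,k+1) + g3 (2,k+1) = 0" for k
    using h[of "5*k+4"] by (simp only: lab_values fst_conv snd_conv)
  have b5: "g1 (3,k+1) + g2 (3,k+1) + g3 (2,k+1) = 0" for k
    using h[of "5*k+5"] by (simp only: lab_values fst_conv snd_conv)
  have b6: "g1 (2,k+1) + g2 (3,k+1) + g3 (2,k) = 0" for k
    using h[of "5*k+6"] by (simp only: lab_values fst_conv snd_conv)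
  have b7: "g1 (3,k+1) + g2 (2,k+1) + g3 (0,0) = 0" for k
    using h[of "5*k+7"] by (simp only: lab_values fst_conv snd_conv)
  have b8: "g1 (0,0) + g2 (2,k) + g3 (2,k+1) = 0" for k
    using h[of "5*k+8"] by (simp only: lab_values fst_conv snd_conv)
  have b1: "g1 (0,0) + g2 (0,0) + g3 (0,0) = 0" using h[of 1] by (simp add: lab_values)
  have b2: "g1 (1,0) + g2 (2,0) + g3 (0,0) = 0" using h[of 2] by (simp add: lab_values)
  have b3: "g1 (1,0) + g2 (0,0) + g3 (2,0) = 0" using h[of 3] by (simp add: lab_values)
  have halve: "g3 (2,k) - g3 (0,0) = 2 * (g3 (2,k+1) - g3 (0,0))" for k
    using b4[of k] b5[of k] b6[of k] b7[of k] by algebra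
  have g2_g3: "g2 (2,k) - g2 (0,0) = - (g3 (2,k+1) - g3 (0,0))" for k
    using b8[of k] b1 by algebra
  have "3 * (g3 (2,1) - g3 (0,0)) = 0"
    using halve[of 0] g2_g3[of 0] b2 b3 by simp algebra
  then have e1: "g3 (2,1) = g3 (0,0)" by simp
  have g3_succ: "g3 (2,k+1) = g3 (0,0)" for k
  proof (induction k)
    case 0 then show ?case using e1 by simp
  next
    case (Suc k) then show ?case using halve[of "k+1"] by simp
  qed
  have g3_2: "g3 (2,k) = g3 (0,0)" for k
    using halve[of k] g3_succ[of k] by simp
  have g2_2: "g2 (2,k) = g2 (0,0)" for k using g2_g3[of k] g3_succ[of k] by simp
  have g1_2: "g1 (2,k+1) = g1 (0,0)" for k using b4[of k] g2_2[of "k+1"] g3_succ[of k] b1 by algebra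
  have g1_3: "g1 (3,k+1) = g1 (0,0)" for k using b7[of k] g2_2[of "k+1"] b1 by algebra
  have g2_3: "g2 (3,k+1) = g2 (0,0)" for k using b5[of k] g1_3[of k] g3_succ[of k] b1 by algebra
  have g1_1: "g1 (1,0) = g1 (0,0)" using b2 b1 g2_2[of 0] by algebra
  show "g1 (lab1 i) = g1 (0,0)" if "1 \<le> i" for i
    by (rule index_cases[OF that]; hypsubst; simp only: lab_values fst_conv snd_conv g1_1 g1_2 g1_3)
  show "g2 (lab2 i) = g2 (0,0)" if "1 \<le> i" for i
    by (rule index_cases[OF that]; hypsubst; simp only: lab_values fst_conv snd_conv g2_2 g2_3)
  show "g3 (lab3 i) = g3 (0,0)" if "1 \<le> i" for i
    by (rule index_cases[OF that]; hypsubst; simp only: lab_values fst_conv snd_conv g3_2 g3_succ)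
  show "g1 (0,0) + g2 (0,0) + g3 (0,0) = 0" by (rule b1)
qed

lemma lab_not_extendable: "\<not> extendable (lab ` {1..})"
proof
  assume "extendable (lab ` {1..})"
  then obtain d1 d2 d3 w1 w2 w3
    where d: "\<forall>w\<in>lab ` {1..}. d1 (fst w) + d2 (fst (snd w)) + d3 (snd (snd w)) = (0::complex)"
      and w: "w1 \<in> proj1 (lab ` {1..})" "w2 \<in> proj2 (lab ` {1..})" "w3 \<in> proj3 (lab ` {1..})"
      and nz: "d1 w1 + d2 w2 + d3 w3 \<noteq> 0"
    by (rule extendableE)
  have vanish: "d1 (lab1 i) + d2 (lab2 i) + d3 (lab3 i) = 0" if "1 \<le> i" for i
    using d that by simp
  obtain i j l where "1 \<le> i" "w1 = lab1 i" "1 \<le> j" "w2 = lab2 j" "1 \<le> l" "w3 = lab3 l"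
    using w unfolding proj_lab by auto
  then have "d1 w1 + d2 w2 + d3 w3 = d1 (0,0) + d2 (0,0) + d3 (0,0)"
    using lab_sum_vanishing_constant(1-3)[of d1 d2 d3, OF vanish] by simp
  also have "\<dots> = 0" using lab_sum_vanishing_constant(4)[of d1 d2 d3, OF vanish] .
  finally show False using nz by contradiction
qed

text \<open>The canonical model is good: a function F on it is a sum g1 + g2 + g3, where the values
  e k = g3(2,k) are determined by a halving recursion from the block equations and the
  remaining values are read off point by point.\<close>

lemma lab_good: "good UNIV UNIV UNIV (lab ` {1..})"
  unfolding good_def
proof (intro conjI allI)
  fix f :: "label \<times> label \<times> label \<Rightarrow> complex"
  define F where "F i = f (lab i)" for i
  define H where "H k = F (5*k+4) + F (5*k+5) - F (5*k+6) - F (5*k+7)" for k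
  define e where "e = rec_nat ((2/3) * (F 3 - F 1 - F 2 + F 8) - H 0 / 3) (\<lambda>k ek. (ek + H k) / 2)"
  define c where "c k = F (5*k+8) - e (k+1)" for k
  define al where "al k = F (5*k+4) - c (k+1) - e (k+1)" for k
  define be where "be k = F (5*k+7) - c (k+1)" for k
  define dl where "dl k = F (5*k+6) - al k - e k" for k
  define g1 where "g1 = (\<lambda>(t :: nat, n). if t = 0 then 0 else if t = 1 then F 2 - c 0
      else if t = 2 then al (n - 1) else be (n - 1))"
  define g2 where "g2 = (\<lambda>(t :: nat, n). if t = 0 then F 1 else if t = 2 then c n else dl (n - 1))"
  define g3 where "g3 = (\<lambda>(t :: nat, n :: nat). if t = 0 then 0 else e n)"
  have e_0: "e 0 = (2/3) * (F 3 - F 1 - F 2 + F 8) - H 0 / 3" unfolding e_def by simp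
  have e_succ: "2 * e (k+1) = e k + H k" for k unfolding e_def by simp
  have e_init: "e 0 + e 1 = F 3 - F 1 - F 2 + F 8"
  proof -
    have "2 * (e 0 + e 1) = 3 * e 0 + H 0" using e_succ[of 0] by simp
    also have "\<dots> = 2 * (F 3 - F 1 - F 2 + F 8)" unfolding e_0 by (simp add: algebra_simps)
    finally show ?thesis by (simp only: mult_cancel_left) simp
  qed
  have fits: "F i = g1 (lab1 i) + g2 (lab2 i) + g3 (lab3 i)" if "1 \<le> i" for i
  proof (rule index_cases[OF that])
    assume "i = 1" then show ?thesis by (simp add: lab_values g1_def g2_def g3_def)
  next
    assume "i = 2" then show ?thesis by (simp add: lab_values g1_def g2_def g3_def)
  next
    assume "i = 3" then show ?thesis
      using e_init by (simp add: lab_values g1_def g2_def g3_def c_def algebra_simps)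
  next
    fix k assume i: "i = 5*k+4" show ?thesis
      unfolding i lab_values fst_conv snd_conv by (simp add: g1_def g2_def g3_def al_def)
  next
    fix k assume i: "i = 5*k+5" show ?thesis
      unfolding i lab_values fst_conv snd_conv using e_succ[of k]
      by (simp add: g1_def g2_def g3_def be_def dl_def al_def H_def algebra_simps)
  next
    fix k assume i: "i = 5*k+6" show ?thesis
      unfolding i lab_values fst_conv snd_conv by (simp add: g1_def g2_def g3_def dl_def)
  next
    fix k assume i: "i = 5*k+7" show ?thesis
      unfolding i lab_values fst_conv snd_conv by (simp add: g1_def g2_def g3_def be_def)
  next
    fix k assume i: "i = 5*k+8" show ?thesis
      unfolding i lab_values fst_conv snd_conv by (simp add: g1_def g2_def g3_def c_def)
  qed
  show "\<exists>u1 u2 u3. \<forall>w1 w2 w3. (w1, w2, w3) \<in> lab ` {1..} \<longrightarrow> f (w1, w2, w3) = u1 w1 + u2 w2 + u3 w3"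
  proof (intro exI allI impI)
    fix w1 w2 w3 assume "(w1, w2, w3) \<in> lab ` {1..}"
    then obtain i where "1 \<le> i" "lab i = (w1, w2, w3)" by auto
    then show "f (w1, w2, w3) = g1 w1 + g2 w2 + g3 w3" using fits[of i] unfolding F_def by simp
  qed
qed simp

definition Lab1 :: "label set" where "Lab1 = {(0,0), (1,0)} \<union> {2,3} \<times> {1..}"
definition Lab2 :: "label set" where "Lab2 = {(0,0)} \<union> {2} \<times> UNIV \<union> {3} \<times> {1..}"
definition Lab3 :: "label set" where "Lab3 = {(0,0)} \<union> {2} \<times> UNIV"

lemma proj_lab_Lab:
  "proj1 (lab ` {1..}) \<subseteq> Lab1" "proj2 (lab ` {1..}) \<subseteq> Lab2" "proj3 (lab ` {1..}) \<subseteq> Lab3"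
proof -
  have "lab1 i \<in> Lab1 \<and> lab2 i \<in> Lab2 \<and> lab3 i \<in> Lab3" if "1 \<le> i" for i
    by (rule index_cases[OF that]; hypsubst; simp add: lab_values Lab1_def Lab2_def Lab3_def)
  then show "proj1 (lab ` {1..}) \<subseteq> Lab1" "proj2 (lab ` {1..}) \<subseteq> Lab2" "proj3 (lab ` {1..}) \<subseteq> Lab3"
    unfolding proj_lab by auto
qed

locale construction =
  fixes X1 :: "'a set" and X2 :: "'b set" and X3 :: "'c set"
    and x1 y1 :: 'a and x2 y2 :: 'b and x3 z3 :: 'c
    and A B :: "nat \<Rightarrow> 'a" and C D :: "nat \<Rightarrow> 'b" and E :: "nat \<Rightarrow> 'c"
  assumes inX1: "x1 \<in> X1" "y1 \<in> X1" "A ` {1..} \<subseteq> X1" "B ` {1..} \<subseteq> X1"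
    and inX2: "x2 \<in> X2" "y2 \<in> X2" "C ` {1..} \<subseteq> X2" "D ` {1..} \<subseteq> X2"
    and inX3: "x3 \<in> X3" "z3 \<in> X3" "E ` {1..} \<subseteq> X3"
    and dist1: "x1 \<noteq> y1" "x1 \<notin> A ` {1..}" "x1 \<notin> B ` {1..}" "y1 \<notin> A ` {1..}" "y1 \<notin> B ` {1..}"
      "inj_on A {1..}" "inj_on B {1..}" "A ` {1..} \<inter> B ` {1..} = {}"
    and dist2: "x2 \<noteq> y2" "x2 \<notin> C ` {1..}" "x2 \<notin> D ` {1..}" "y2 \<notin> C ` {1..}" "y2 \<notin> D ` {1..}"
      "inj_on C {1..}" "inj_on D {1..}" "C ` {1..} \<inter> D ` {1..} = {}"
    and dist3: "x3 \<noteq> z3" "x3 \<notin> E ` {1..}" "z3 \<notin> E ` {1..}" "inj_on E {1..}"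
begin

definition V1 :: "label \<Rightarrow> 'a" where
  "V1 = (\<lambda>(t, n). if t = 0 then x1 else if t = 1 then y1 else if t = 2 then A n else B n)"
definition V2 :: "label \<Rightarrow> 'b" where
  "V2 = (\<lambda>(t, n). if t = 0 then x2 else if t = 2 then extC y2 C n else D n)"
definition V3 :: "label \<Rightarrow> 'c" where
  "V3 = (\<lambda>(t, n). if t = 0 then x3 else extE z3 E n)"

lemma V1_inj: "inj_on V1 Lab1"
  unfolding inj_on_def Lab1_def V1_def using dist1 by (auto simp: inj_on_eq_iff)

lemma V2_inj: "inj_on V2 Lab2"
proof -
  have "C n \<noteq> D m" "D m \<noteq> C n" if "1 \<le> n" "1 \<le> m" for n m using dist2(8) that by auto
  then show ?thesis
    unfolding inj_on_def Lab2_def V2_def extC_def using dist2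
    by (auto simp: inj_on_eq_iff split: if_splits)
qed

lemma V3_inj: "inj_on V3 Lab3"
  unfolding inj_on_def Lab3_def V3_def extE_def using dist3 by (auto simp: inj_on_eq_iff)

lemma V_range: "V1 ` Lab1 \<subseteq> X1" "V2 ` Lab2 \<subseteq> X2" "V3 ` Lab3 \<subseteq> X3"
  unfolding Lab1_def Lab2_def Lab3_def V1_def V2_def V3_def extC_def extE_def
  using inX1 inX2 inX3 by (auto simp: image_subset_iff Suc_le_eq)

abbreviation V :: "label \<times> label \<times> label \<Rightarrow> 'a \<times> 'b \<times> 'c" where "V \<equiv> map3 V1 V2 V3"

lemma Tset_eq: "Tset x1 y1 x2 y2 x3 z3 A B C D E = V ` lab ` {1..}"
proof -
  have "aseq x1 y1 x2 y2 x3 z3 A B C D E i = V (lab i)" if "1 \<le> i" for i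
    by (rule index_cases[OF that]; hypsubst;
        simp add: aseq_initial aseq_initial(1)[unfolded One_nat_def] aseq_block lab_values V1_def V2_def V3_def extC_def extE_def)
  then show ?thesis unfolding Tset_def image_image by (intro image_cong) auto
qed

lemma proj_lab_subset_Lab:
  assumes "S \<subseteq> lab ` {1..}"
  shows "proj1 S \<subseteq> Lab1" "proj2 S \<subseteq> Lab2" "proj3 S \<subseteq> Lab3"
proof -
  have "proj1 S \<subseteq> proj1 (lab ` {1..})" "proj2 S \<subseteq> proj2 (lab ` {1..})"
    "proj3 S \<subseteq> proj3 (lab ` {1..})"
    using assms unfolding proj1_def proj2_def proj3_def by auto
  then show "proj1 S \<subseteq> Lab1" "proj2 S \<subseteq> Lab2" "proj3 S \<subseteq> Lab3"
    using proj_lab_Lab by auto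
qed

lemma V_inj_proj:
  assumes "S \<subseteq> lab ` {1..}"
  shows "inj_on V1 (proj1 S)" "inj_on V2 (proj2 S)" "inj_on V3 (proj3 S)"
proof -
  note sub = proj_lab_subset_Lab[OF assms]
  show "inj_on V1 (proj1 S)" using V1_inj sub(1) by (rule inj_on_subset)
  show "inj_on V2 (proj2 S)" using V2_inj sub(2) by (rule inj_on_subset)
  show "inj_on V3 (proj3 S)" using V3_inj sub(3) by (rule inj_on_subset)
qed

lemma T_sub: "V ` lab ` {1..} \<subseteq> X1 \<times> X2 \<times> X3"
proof (rule image_subsetI)
  fix l assume "l \<in> lab ` {1..}"
  then have "fst l \<in> Lab1" "fst (snd l) \<in> Lab2" "snd (snd l) \<in> Lab3"
    using proj_lab_Lab unfolding proj1_def proj2_def proj3_def by auto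
  then show "V l \<in> X1 \<times> X2 \<times> X3"
    using V_range by (auto simp: map_prod_def split_beta)
qed

lemma T_good: "good X1 X2 X3 (V ` lab ` {1..})"
  using lab_good V_inj_proj[OF order_refl] T_sub by (rule good_map3)

lemma T_full: "full X1 X2 X3 (V ` lab ` {1..})"
  using T_good
proof (rule full_if_not_extendable)
  show "\<not> extendable (V ` lab ` {1..})"
    using lab_not_extendable extendable_map3_back by blast
qed

lemma T_finite_subsets_extendable:
  assumes F: "F \<subseteq> V ` lab ` {1..}" "finite F" "2 \<le> card F"
  shows "extendable F"
proof -
  obtain I where I: "I \<subseteq> {1..}" "finite I" "F = V ` lab ` I"
    using finite_subset_image[OF F(2,1)[unfolded image_image]] unfolding image_image by blast
  have "card F \<le> card I" unfolding I(3) image_image by (rule card_image_le[OF I(2)])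
  then have "extendable (lab ` I)" using lab_finite_subsets_extendable I(1,2) F(3) by simp
  moreover have "lab ` I \<subseteq> lab ` {1..}" using I(1) by blast
  ultimately show ?thesis unfolding I(3) by (intro extendable_map3 V_inj_proj)
qed

lemma T_infinite: "infinite (V ` lab ` {1..})"
proof -
  have "inj_on V (lab ` {1..})" using V_inj_proj[OF order_refl] by (rule inj_on_map3)
  moreover have "infinite (lab ` {1..})"
    using lab_inj by (simp add: finite_image_iff infinite_Ici)
  ultimately show ?thesis by (simp add: finite_image_iff)
qed

end

theorem mainTheorem5:
  fixes X1 :: "'a set" and X2 :: "'b set" and X3 :: "'c set"
    and x1 y1 :: 'a and x2 y2 :: 'b and x3 z3 :: 'c
    and A B :: "nat \<Rightarrow> 'a" and C D :: "nat \<Rightarrow> 'b" and E :: "nat \<Rightarrow> 'c"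
  assumes inX1: "x1 \<in> X1" "y1 \<in> X1" "A ` {1..} \<subseteq> X1" "B ` {1..} \<subseteq> X1"
    and inX2: "x2 \<in> X2" "y2 \<in> X2" "C ` {1..} \<subseteq> X2" "D ` {1..} \<subseteq> X2"
    and inX3: "x3 \<in> X3" "z3 \<in> X3" "E ` {1..} \<subseteq> X3"
    and dist1: "x1 \<noteq> y1" "x1 \<notin> A ` {1..}" "x1 \<notin> B ` {1..}" "y1 \<notin> A ` {1..}" "y1 \<notin> B ` {1..}"
      "inj_on A {1..}" "inj_on B {1..}" "A ` {1..} \<inter> B ` {1..} = {}"
    and dist2: "x2 \<noteq> y2" "x2 \<notin> C ` {1..}" "x2 \<notin> D ` {1..}" "y2 \<notin> C ` {1..}" "y2 \<notin> D ` {1..}"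
      "inj_on C {1..}" "inj_on D {1..}" "C ` {1..} \<inter> D ` {1..} = {}"
    and dist3: "x3 \<noteq> z3" "x3 \<notin> E ` {1..}" "z3 \<notin> E ` {1..}" "inj_on E {1..}"
  defines "T \<equiv> Tset x1 y1 x2 y2 x3 z3 A B C D E"
  shows "good X1 X2 X3 T \<and> full X1 X2 X3 T
      \<and> full_components X1 X2 X3 T = {T}
      \<and> (\<forall>p \<in> T. {q \<in> T. related X1 X2 X3 T p q} = {p})
      \<and> (\<forall>R \<in> related_components X1 X2 X3 T. \<exists>p. R = {p})
      \<and> infinite (related_components X1 X2 X3 T)"
proof -
  interpret construction X1 X2 X3 x1 y1 x2 y2 x3 z3 A B C D E
    by (rule construction.intro) (fact inX1 inX2 inX3 dist1 dist2 dist3)+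
  have T: "T = V ` lab ` {1..}" unfolding T_def by (rule Tset_eq)
  have related: "related X1 X2 X3 T p q \<longleftrightarrow> p = q" if "p \<in> T" "q \<in> T" for p q
    using T_sub T_finite_subsets_extendable that unfolding T by (rule related_iff_eq)
  have components: "related_components X1 X2 X3 T = (\<lambda>p. {p}) ` T"
    using related by (rule related_components_singletons)
  have "inj_on (\<lambda>p. {p}) T" by (rule inj_onI) simp
  then have "infinite ((\<lambda>p. {p}) ` T)" using T_infinite unfolding T by (simp add: finite_image_iff)
  moreover have full: "full X1 X2 X3 T" unfolding T by (rule T_full)
  moreover have "full_components X1 X2 X3 T = {T}" using full by (rule full_components_of_full)
  moreover have "\<forall>p \<in> T. {q \<in> T. related X1 X2 X3 T p q} = {p}" using related by blast
  ultimately show ?thesis using T_good unfolding components T[symmetric] by blast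
qed

end
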